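(* Let $C=\{C_n\}_{n\in\mathbb N}$, $C_n\subseteq \Sigma_n^n$, be the code family fixed in the context (we suppress the index $n$). For any unbounded-time (quantum) algorithm $\mathcal{B}$ that makes polynomially many classical queries to $H$ and any polynomial $s$, there is a negligible function $\mu$ such that for every family $\{z_H\}_{H}$ of $s(n)$-bit classical advice strings (indexed by functions $H$), $$\Pr_{H,r}\big[f_C^H(\mathcal{B}^H(z_H,r))=r\big]\le \mu(n),$$ where $H\leftarrow \mathsf{Func}([n]\times\Sigma,\{0,1\})$ and $r\leftarrow\{0,1\}^n$ are uniform.
   Context: For sets $X,Y$, $\mathsf{Func}(X,Y)$ is the set of all functions $X\to Y$; $[n]=\{1,\dots,n\}$. For a code $C\subseteq\Sigma^n$ and $H:[n]\times\Sigma\to\{0,1\}$, the YZ function is $f_C^H:C\to\{0,1\}^n$, $f_C^H(v_1,\dots,v_n)=H(1,v_1)\|H(2,v_2)\|\cdots\|H(n,v_n)$; the event $f_C^H(\mathbf v)=r$ includes the requirement $\mathbf v\in C$. A code $C\subseteq\Sigma^n$ is $(\zeta,\ell,L)$-list-recoverable if for all subsets $T_1,\dots,T_n\subseteq\Sigma$ with $|T_i|\le\ell$, the number of codewords $(v_1,\dots,v_n)\in C$ with $|\{i: v_i\in T_i\}|\ge(1-\zeta)n$ is at most $L$. Fixed code family (from Yamakawa–Zhandry and Liu): $C=\{C_n\}$, $C_n\subseteq\Sigma_n^n$, which is $(\zeta,\ell,L)$-list-recoverable with $\zeta=\Omega(1)$, $\ell=2^{n^c}$, $L=2^{\tilde O(n^{c'})}$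 for some constants $0<c<c'<1$, and which moreover has the property that there is a QPT algorithm $\mathcal A$ and a family of $\mathrm{poly}(n)$-qubit quantum advice states $\{|z_H\rangle\}_H$ such that for every $r\in\{0,1\}^n$, $\Pr_H[f_C^H(\mathcal A(|z_H\rangle,r))=r]\ge1-\mathrm{negl}(n)$ for uniform $H\leftarrow\mathsf{Func}([n]\times\Sigma,\{0,1\})$. "Classical queries" means the algorithm submits a classical input $x$ and receives $H(x)$. The advice $z_H$ may be an arbitrary function of $H$. *)

theory Defs
  imports "HOL-Probability.Probability"
begin

text \<open>Functions H : [n] x Sigma -> {0,1}; represented as total functions that are
  False outside the domain [n] x Sigma (so uniform sampling is over Func([n] x Sigma, {0,1})).\<close>
type_synonym 'a hfun = "nat \<times> 'a \<Rightarrow> bool"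

type_synonym 'a transcript = "((nat \<times> 'a) \<times> bool) list"

definition hfuncs :: "nat \<Rightarrow> 'a set \<Rightarrow> 'a hfun set" where
  "hfuncs n \<Sigma> = {H. \<forall>x. x \<notin> {1..n} \<times> \<Sigma> \<longrightarrow> H x = False}"

definition bitstrings :: "nat \<Rightarrow> bool list set" where
  "bitstrings n = {r. length r = n}"

definition words :: "nat \<Rightarrow> 'a set \<Rightarrow> 'a list set" where
  "words n \<Sigma> = {v. length v = n \<and> set v \<subseteq> \<Sigma>}"

text \<open>The event f_C^H(v) = r (includes v \<in> C). Coordinate i \<in> [n] of v is v ! (i-1).\<close>
definition yz_eq :: "nat \<Rightarrow> 'a list set \<Rightarrow> 'a hfun \<Rightarrow> 'a list \<Rightarrow> bool list \<Rightarrow> bool" where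
  "yz_eq n C H v r \<longleftrightarrow> v \<in> C \<and> length v = n \<and> map (\<lambda>i. H (Suc i, v ! i)) [0..<n] = r"

definition list_recoverable ::
  "nat \<Rightarrow> 'a set \<Rightarrow> 'a list set \<Rightarrow> real \<Rightarrow> real \<Rightarrow> real \<Rightarrow> bool" where
  "list_recoverable n \<Sigma> C \<zeta> ell L \<longleftrightarrow>
     (\<forall>T :: nat \<Rightarrow> 'a set. (\<forall>i\<in>{1..n}. T i \<subseteq> \<Sigma> \<and> real (card (T i)) \<le> ell) \<longrightarrow>
        real (card {v \<in> C. real (card {i\<in>{1..n}. v ! (i - 1) \<in> T i}) \<ge> (1 - \<zeta>) * real n}) \<le> L)"

text \<open>Run of an adaptive randomized strategy making k classical queries:
  nq gives the distribution of the next query given the transcript so far.\<close>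
fun run_queries :: "('a transcript \<Rightarrow> (nat \<times> 'a) pmf) \<Rightarrow> 'a hfun \<Rightarrow> nat \<Rightarrow> 'a transcript \<Rightarrow> 'a transcript pmf" where
  "run_queries nq H 0 h = return_pmf h"
| "run_queries nq H (Suc k) h = nq h \<bind> (\<lambda>x. run_queries nq H k (h @ [(x, H x)]))"

definition alg_output ::
  "('a transcript \<Rightarrow> (nat \<times> 'a) pmf) \<Rightarrow> ('a transcript \<Rightarrow> 'a list pmf) \<Rightarrow> 'a hfun \<Rightarrow> nat \<Rightarrow> 'a list pmf" where
  "alg_output nq out H k = run_queries nq H k [] \<bind> out"

text \<open>Success probability Pr_{H,r}[f_C^H(B^H(z_H, r)) = r] (also over B's internal randomness).
  The strategy receives n, the advice z_H and r.\<close>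
definition success_prob ::
  "(nat \<Rightarrow> bool list \<Rightarrow> bool list \<Rightarrow> 'a transcript \<Rightarrow> (nat \<times> 'a) pmf) \<Rightarrow>
   (nat \<Rightarrow> bool list \<Rightarrow> bool list \<Rightarrow> 'a transcript \<Rightarrow> 'a list pmf) \<Rightarrow> (nat \<Rightarrow> nat) \<Rightarrow>
   (nat \<Rightarrow> 'a set) \<Rightarrow> (nat \<Rightarrow> 'a list set) \<Rightarrow> nat \<Rightarrow> ('a hfun \<Rightarrow> bool list) \<Rightarrow> real" where
  "success_prob nq out q \<Sigma> C n z =
     pmf (do { H \<leftarrow> pmf_of_set (hfuncs n (\<Sigma> n));
               r \<leftarrow> pmf_of_set (bitstrings n);
               v \<leftarrow> alg_output (nq n (z H) r) (out n (z H) r) H (q n);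
               return_pmf (yz_eq n (C n) H v r) }) True"

definition poly_bounded :: "(nat \<Rightarrow> nat) \<Rightarrow> bool" where
  "poly_bounded f \<longleftrightarrow> (\<exists>K d::nat. \<forall>n. f n \<le> K * (n + 1) ^ d)"

definition negl_fun :: "(nat \<Rightarrow> real) \<Rightarrow> bool" where
  "negl_fun \<mu> \<longleftrightarrow> (\<forall>c::nat. \<exists>N. \<forall>n\<ge>N. \<bar>\<mu> n\<bar> \<le> 1 / real n ^ c)"

definition good_code_family :: "(nat \<Rightarrow> 'a set) \<Rightarrow> (nat \<Rightarrow> 'a list set) \<Rightarrow> bool" where
  "good_code_family \<Sigma> C \<longleftrightarrow>
     (\<forall>n. finite (\<Sigma> n) \<and> C n \<subseteq> words n (\<Sigma> n)) \<and>
     (\<exists>\<zeta> c c' K k. \<zeta> > 0 \<and> 0 < c \<and> c < c' \<and> c' < 1 \<and>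
        (\<exists>N. \<forall>n\<ge>N. list_recoverable n (\<Sigma> n) (C n) \<zeta>
                 (2 powr (real n powr c))
                 (2 powr (K * real n powr c' * (ln (real n)) ^ k))))"

end

theory Submission
  imports Defs "HOL-Real_Asymp.Real_Asymp"
begin

text \<open>
  Fix \<open>r\<close> and follow the oracle algorithm query by query. For a transcript \<open>\<kappa>\<close>, call a
  codeword heavy if \<open>\<kappa>\<close> reveals at least \<open>(1 - \<zeta>) n\<close> of its coordinates; by list recovery
  there are at most \<open>L\<close> heavy codewords while \<open>|\<kappa>| \<le> \<ell>\<close>, and a light codeword is mapped to
  \<open>r\<close> with conditional probability at most \<open>2^(-\<zeta> n)\<close>. A potential that adds up the
  conditional success probabilities of the heavy codewords and charges \<open>2^(-\<zeta> n)\<close> for each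
  codeword that may still become heavy is a supermartingale along the queries, so averaging over
  \<open>r\<close> bounds the success probability by \<open>\<delta> = L (2^(-n) + 2^(-\<zeta> n)) + 2^(-\<zeta> n)\<close>,
  uniformly over all \<open>H\<close> consistent with any fixed short transcript.

  Running \<open>t\<close> independent copies one after another and conditioning each on the transcripts of
  the previous ones gives \<open>E_H[Y(H)^t] \<le> \<delta>^t\<close> for the success probability \<open>Y(H)\<close> of a fixed
  algorithm. With \<open>s\<close> bits of advice, \<open>Y_(z_H)(H)^(s+1)\<close> is bounded by the sum over all
  \<open>2^s\<close> advice strings, and Jensen's inequality yields \<open>E_H[Y_(z_H)(H)] \<le> 2 \<delta>\<close>, which is
  negligible because \<open>L = 2^(O~(n^c'))\<close> with \<open>c' < 1\<close>.
\<close>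

section \<open>Consistent functions and bit strings\<close>

definition consistent :: "'a hfun \<Rightarrow> 'a transcript \<Rightarrow> bool" where
  "consistent H \<kappa> \<longleftrightarrow> (\<forall>p\<in>set \<kappa>. H (fst p) = snd p)"

lemma consistent_append [simp]: "consistent H (\<kappa> @ \<kappa>') \<longleftrightarrow> consistent H \<kappa> \<and> consistent H \<kappa>'"
  by (auto simp: consistent_def)

lemma consistent_Cons [simp]: "consistent H (p # \<kappa>) \<longleftrightarrow> H (fst p) = snd p \<and> consistent H \<kappa>"
  by (auto simp: consistent_def)

lemma consistent_Nil [simp]: "consistent H []"
  by (simp add: consistent_def)

lemma consistent_fun_upd:
  "x \<notin> fst ` set \<kappa> \<Longrightarrow> consistent (H(x := b)) \<kappa> \<longleftrightarrow> consistent H \<kappa>"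
  by (force simp: consistent_def)

lemma card_eq_double_by_involution:
  assumes "finite S" "\<And>s. s \<in> S \<Longrightarrow> f s \<in> S" "\<And>s. s \<in> S \<Longrightarrow> f (f s) = s"
    and "\<And>s. s \<in> S \<Longrightarrow> P (f s) \<longleftrightarrow> \<not> P s"
  shows "card S = 2 * card {s\<in>S. P s}"
proof -
  have "bij_betw f {s\<in>S. P s} {s\<in>S. \<not> P s}"
    by (rule bij_betw_byWitness[where f'=f]) (auto simp: assms)
  then have "card {s\<in>S. P s} = card {s\<in>S. \<not> P s}"
    by (rule bij_betw_same_card)
  moreover have "card S = card {s\<in>S. P s} + card {s\<in>S. \<not> P s}"
    using assms(1) by (subst card_Un_disjoint[symmetric]) (auto intro: arg_cong[where f=card])
  ultimately show ?thesis
    by simp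
qed

lemma hfuncs_eq_indicators: "hfuncs n S = (\<lambda>A x. x \<in> A) ` Pow ({1..n} \<times> S)"
proof -
  have "H \<in> (\<lambda>A x. x \<in> A) ` Pow ({1..n} \<times> S)" if "H \<in> hfuncs n S" for H
  proof
    show "H = (\<lambda>x. x \<in> {x. H x})"
      by simp
    show "{x. H x} \<in> Pow ({1..n} \<times> S)"
      using that unfolding hfuncs_def by blast
  qed
  then show ?thesis
    by (auto simp: hfuncs_def)
qed

lemma finite_hfuncs: "finite S \<Longrightarrow> finite (hfuncs n S)"
  by (simp add: hfuncs_eq_indicators)

lemma hfuncs_not_empty: "hfuncs n S \<noteq> {}"
  by (auto simp: hfuncs_def)

lemma hfuncs_fun_upd: "H \<in> hfuncs n S \<Longrightarrow> x \<in> {1..n} \<times> S \<Longrightarrow> H(x := b) \<in> hfuncs n S"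
  by (auto simp: hfuncs_def)

definition num_consistent :: "nat \<Rightarrow> 'a set \<Rightarrow> 'a transcript \<Rightarrow> nat" where
  "num_consistent n S \<kappa> = card {H \<in> hfuncs n S. consistent H \<kappa>}"

lemma num_consistent_fresh_query:
  assumes "finite S" "x \<in> {1..n} \<times> S" "x \<notin> fst ` set \<kappa>"
  shows "num_consistent n S \<kappa> = 2 * num_consistent n S (\<kappa> @ [(x, b)])"
proof -
  have eq: "{H \<in> hfuncs n S. consistent H (\<kappa> @ [(x, b)])} = {H \<in> {H \<in> hfuncs n S. consistent H \<kappa>}. H x = b}"
    by auto
  show ?thesis
    unfolding num_consistent_def eq
    by (rule card_eq_double_by_involution[where f="\<lambda>H. H(x := \<not> H x)"])
       (use assms in \<open>auto simp: consistent_fun_upd finite_hfuncs hfuncs_fun_upd\<close>)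
qed

lemma num_consistent_split:
  "finite S \<Longrightarrow> num_consistent n S \<kappa> = num_consistent n S (\<kappa> @ [(x, True)]) + num_consistent n S (\<kappa> @ [(x, False)])"
  unfolding num_consistent_def
  by (subst card_Un_disjoint[symmetric]) (auto simp: finite_hfuncs intro!: arg_cong[where f=card])

lemma sum_consistent_append:
  assumes "finite S"
  shows "(\<Sum>H | H \<in> hfuncs n S \<and> consistent H \<kappa>. f H (H x))
    = (\<Sum>H | H \<in> hfuncs n S \<and> consistent H (\<kappa> @ [(x, True)]). f H True)
      + (\<Sum>H | H \<in> hfuncs n S \<and> consistent H (\<kappa> @ [(x, False)]). f H False)"
proof -
  have split: "{H. H \<in> hfuncs n S \<and> consistent H \<kappa>}
      = {H. H \<in> hfuncs n S \<and> consistent H (\<kappa> @ [(x, True)])}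
        \<union> {H. H \<in> hfuncs n S \<and> consistent H (\<kappa> @ [(x, False)])}"
    by auto
  show ?thesis
    unfolding split by (subst sum.union_disjoint) (auto simp: finite_hfuncs[OF assms] intro!: sum.cong)
qed

lemma card_consistent_fixing:
  assumes "finite S" "finite U" "U \<subseteq> {1..n} \<times> S - fst ` set \<kappa>"
  shows "card {H \<in> hfuncs n S. consistent H \<kappa> \<and> (\<forall>y\<in>U. H y = g y)} * 2 ^ card U = num_consistent n S \<kappa>"
  using assms(2,3)
proof (induction U rule: finite_induct)
  case empty
  then show ?case
    by (simp add: num_consistent_def)
next
  case (insert y U)
  let ?S = "{H \<in> hfuncs n S. consistent H \<kappa> \<and> (\<forall>y\<in>U. H y = g y)}"
  have "{H \<in> hfuncs n S. consistent H \<kappa> \<and> (\<forall>y\<in>insert y U. H y = g y)} = {H\<in>?S. H y = g y}"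
    by auto
  moreover have "card ?S = 2 * card {H\<in>?S. H y = g y}"
    by (rule card_eq_double_by_involution[where f="\<lambda>H. H(y := \<not> H y)"])
       (use insert assms(1) in \<open>auto simp: consistent_fun_upd finite_hfuncs hfuncs_fun_upd\<close>)
  ultimately show ?case
    using insert by simp
qed

lemma finite_bitstrings: "finite (bitstrings n)"
  using finite_lists_length_eq[of "UNIV :: bool set" n] by (simp add: bitstrings_def)

lemma card_bitstrings: "card (bitstrings n) = 2 ^ n"
  using card_lists_length_eq[of "UNIV :: bool set" n] by (simp add: bitstrings_def)

lemma bitstrings_not_empty: "bitstrings n \<noteq> {}"
  by (auto simp: bitstrings_def intro!: exI[of _ "replicate n False"])

lemma card_bitstrings_fixing:
  assumes "finite I" "I \<subseteq> {..<n}"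
  shows "card {r \<in> bitstrings n. \<forall>j\<in>I. r ! j = g j} * 2 ^ card I = 2 ^ n"
  using assms
proof (induction I rule: finite_induct)
  case empty
  then show ?case
    by (simp add: card_bitstrings)
next
  case (insert y I)
  let ?S = "{r \<in> bitstrings n. \<forall>j\<in>I. r ! j = g j}"
  have "{r \<in> bitstrings n. \<forall>j\<in>insert y I. r ! j = g j} = {r\<in>?S. r ! y = g y}"
    by auto
  moreover have "card ?S = 2 * card {r\<in>?S. r ! y = g y}"
    by (rule card_eq_double_by_involution[where f="\<lambda>r. r[y := \<not> r ! y]"])
       (use insert finite_bitstrings in \<open>auto simp: bitstrings_def nth_list_update\<close>)
  ultimately show ?case
    using insert by simp
qed

lemma yz_eq_nth: "yz_eq n C H v r \<Longrightarrow> j < n \<Longrightarrow> H (Suc j, v ! j) = r ! j"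
  by (auto simp: yz_eq_def)

lemma sum_expectation_le:
  fixes f :: "'b \<Rightarrow> 'c \<Rightarrow> real"
  assumes "\<And>a x. \<bar>f a x\<bar> \<le> B" "\<And>x. \<bar>h x\<bar> \<le> B'"
    and "\<And>x. x \<in> set_pmf M \<Longrightarrow> (\<Sum>a\<in>A. f a x) \<le> h x"
  shows "(\<Sum>a\<in>A. measure_pmf.expectation M (f a)) \<le> measure_pmf.expectation M h"
proof -
  have int: "integrable (measure_pmf M) (f a)" for a
    by (rule measure_pmf.integrable_const_bound[where B=B]) (use assms(1) in auto)
  have "(\<Sum>a\<in>A. measure_pmf.expectation M (f a)) = measure_pmf.expectation M (\<lambda>x. \<Sum>a\<in>A. f a x)"
    using int by (simp add: Bochner_Integration.integral_sum)
  also have "\<dots> \<le> measure_pmf.expectation M h"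
  proof (rule integral_mono_AE)
    show "integrable (measure_pmf M) h"
      by (rule measure_pmf.integrable_const_bound[where B=B']) (use assms(2) in auto)
  qed (use int assms(3) in \<open>auto intro: AE_pmfI\<close>)
  finally show ?thesis .
qed

section \<open>The potential argument\<close>

definition error_bound :: "nat \<Rightarrow> real \<Rightarrow> real \<Rightarrow> real" where
  "error_bound n \<zeta> L = L * ((1/2) ^ n + 2 powr (-(\<zeta> * n))) + 2 powr (-(\<zeta> * n))"

locale recoverable_code =
  fixes n :: nat and \<Sigma> :: "'a set" and C :: "'a list set" and \<zeta> ell L :: real
  assumes finite_alphabet: "finite \<Sigma>"
    and code_words: "C \<subseteq> words n \<Sigma>"
    and recoverable: "list_recoverable n \<Sigma> C \<zeta> ell L"
begin

text \<open>Coordinate \<open>j < n\<close> of a word \<open>v\<close> corresponds to the query \<open>(Suc j, v ! j)\<close>.\<close>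

definition queried :: "'a transcript \<Rightarrow> 'a list \<Rightarrow> nat set" where
  "queried \<kappa> v = {j. j < n \<and> (Suc j, v ! j) \<in> fst ` set \<kappa>}"

definition unqueried :: "'a transcript \<Rightarrow> 'a list \<Rightarrow> nat" where
  "unqueried \<kappa> v = n - card (queried \<kappa> v)"

definition heavy :: "'a transcript \<Rightarrow> 'a list set" where
  "heavy \<kappa> = {v \<in> C. (1 - \<zeta>) * n \<le> card (queried \<kappa> v)}"

definition agrees :: "bool list \<Rightarrow> 'a transcript \<Rightarrow> 'a list \<Rightarrow> bool" where
  "agrees r \<kappa> v \<longleftrightarrow> (\<forall>p\<in>set \<kappa>. \<forall>j<n. fst p = (Suc j, v ! j) \<longrightarrow> snd p = r ! j)"

definition weight :: "bool list \<Rightarrow> 'a transcript \<Rightarrow> 'a list \<Rightarrow> real" where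
  "weight r \<kappa> v = (if agrees r \<kappa> v then (1/2) ^ unqueried \<kappa> v else 0)"

definition threshold :: real where
  "threshold = 2 powr (-(\<zeta> * n))"

text \<open>\<open>weight r \<kappa> v\<close> is the probability that \<open>f_C^H(v) = r\<close> for \<open>H\<close> uniform among the
  functions consistent with \<open>\<kappa>\<close>. The potential counts this for heavy codewords and charges
  every codeword that may still become heavy (at most \<open>L\<close> in total) with the threshold, which
  bounds the weight of any light codeword.\<close>

definition potential :: "bool list \<Rightarrow> 'a transcript \<Rightarrow> real" where
  "potential r \<kappa> = (\<Sum>v\<in>heavy \<kappa>. weight r \<kappa> v) + threshold * (L - card (heavy \<kappa>))"

lemma finite_code: "finite C"
proof -
  have "words n \<Sigma> \<subseteq> {xs. set xs \<subseteq> \<Sigma> \<and> length xs = n}"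
    by (auto simp: words_def)
  then have "finite (words n \<Sigma>)"
    using finite_lists_length_eq[OF finite_alphabet, of n] finite_subset by blast
  then show ?thesis
    using code_words finite_subset by blast
qed

lemma code_letter: "v \<in> C \<Longrightarrow> j < n \<Longrightarrow> v ! j \<in> \<Sigma>"
  using code_words by (force simp: words_def)

lemma queried_subset: "queried \<kappa> v \<subseteq> {..<n}"
  by (auto simp: queried_def)

lemma finite_queried: "finite (queried \<kappa> v)"
  using finite_subset[OF queried_subset] by simp

lemma finite_heavy: "finite (heavy \<kappa>)"
  using finite_code by (simp add: heavy_def)

lemma threshold_nonneg: "0 \<le> threshold"
  by (simp add: threshold_def)

lemma card_heavy_le:
  assumes "length \<kappa> \<le> ell"
  shows "card (heavy \<kappa>) \<le> L"
proof -
  define T where "T i = {\<sigma>\<in>\<Sigma>. (i, \<sigma>) \<in> fst ` set \<kappa>}" for i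
  have "card (T i) \<le> ell" for i
  proof -
    have "card (T i) \<le> card (fst ` set \<kappa>)"
      by (rule card_inj_on_le[where f="\<lambda>\<sigma>. (i, \<sigma>)"]) (auto simp: T_def inj_on_def)
    also have "\<dots> \<le> length \<kappa>"
      using card_image_le card_length le_trans by blast
    finally show ?thesis
      using assms by linarith
  qed
  then have "\<forall>i\<in>{1..n}. T i \<subseteq> \<Sigma> \<and> card (T i) \<le> ell"
    by (auto simp: T_def)
  then have "card {v \<in> C. (1 - \<zeta>) * n \<le> card {i\<in>{1..n}. v ! (i - 1) \<in> T i}} \<le> L"
    using recoverable unfolding list_recoverable_def by blast
  moreover have "card {i\<in>{1..n}. v ! (i - 1) \<in> T i} = card (queried \<kappa> v)" if "v \<in> C" for v
  proof -
    have "i \<in> {1..n} \<and> v ! (i - 1) \<in> T i \<longleftrightarrow> i \<in> Suc ` queried \<kappa> v" for i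
      by (cases i) (auto simp: T_def queried_def code_letter[OF that])
    then have "{i\<in>{1..n}. v ! (i - 1) \<in> T i} = Suc ` queried \<kappa> v"
      by blast
    then show ?thesis
      by (simp add: card_image)
  qed
  then have "{v \<in> C. (1 - \<zeta>) * n \<le> card {i\<in>{1..n}. v ! (i - 1) \<in> T i}} = heavy \<kappa>"
    by (auto simp: heavy_def)
  ultimately show ?thesis
    by simp
qed

lemma potential_nonneg: "length \<kappa> \<le> ell \<Longrightarrow> 0 \<le> potential r \<kappa>"
  unfolding potential_def weight_def using card_heavy_le[of \<kappa>] threshold_nonneg
  by (intro add_nonneg_nonneg mult_nonneg_nonneg sum_nonneg) auto

lemma L_nonneg: "0 \<le> ell \<Longrightarrow> 0 \<le> L"
  using card_heavy_le[of "[]"] by simp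

lemma light_weight_le:
  assumes "v \<in> C" "v \<notin> heavy \<kappa>"
  shows "weight r \<kappa> v \<le> threshold"
proof -
  have "card (queried \<kappa> v) < (1 - \<zeta>) * n"
    using assms by (auto simp: heavy_def)
  moreover have "card (queried \<kappa> v) \<le> n"
    using card_mono[OF _ queried_subset] by fastforce
  ultimately have "\<zeta> * n \<le> unqueried \<kappa> v"
    by (simp add: unqueried_def of_nat_diff left_diff_distrib)
  then have "2 powr (- real (unqueried \<kappa> v)) \<le> threshold"
    unfolding threshold_def by (intro powr_mono) auto
  moreover have "2 powr (- real (unqueried \<kappa> v)) = (1/2::real) ^ unqueried \<kappa> v"
    by (simp add: powr_minus powr_realpow power_one_over inverse_eq_divide)
  ultimately show ?thesis
    using threshold_nonneg by (simp add: weight_def)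
qed

definition hits :: "'a list \<Rightarrow> nat \<times> 'a \<Rightarrow> bool" where
  "hits v x \<longleftrightarrow> fst x \<in> {1..n} \<and> snd x = v ! (fst x - 1)"

lemma coordinate_eq_iff: "j < n \<and> (Suc j, v ! j) = x \<longleftrightarrow> hits v x \<and> j = fst x - 1"
proof (cases x)
  case (Pair i \<sigma>)
  then show ?thesis
    by (cases i) (auto simp: hits_def)
qed

lemma queried_append:
  "queried (\<kappa> @ [(x, b)]) v = queried \<kappa> v \<union> (if hits v x then {fst x - 1} else {})"
proof -
  have "j \<in> queried (\<kappa> @ [(x, b)]) v \<longleftrightarrow> j \<in> queried \<kappa> v \<or> (j < n \<and> (Suc j, v ! j) = x)" for j
    by (auto simp: queried_def)
  then show ?thesis
    unfolding coordinate_eq_iff by auto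
qed

lemma agrees_append:
  "agrees r (\<kappa> @ [(x, b)]) v \<longleftrightarrow> agrees r \<kappa> v \<and> (hits v x \<longrightarrow> b = r ! (fst x - 1))"
proof -
  have "agrees r (\<kappa> @ [(x, b)]) v \<longleftrightarrow> agrees r \<kappa> v \<and> (\<forall>j. j < n \<and> (Suc j, v ! j) = x \<longrightarrow> b = r ! j)"
    by (auto simp: agrees_def)
  then show ?thesis
    unfolding coordinate_eq_iff by auto
qed

lemma potential_append_known:
  assumes "(x, b) \<in> set \<kappa>"
  shows "potential r (\<kappa> @ [(x, b)]) = potential r \<kappa>"
proof -
  have "set (\<kappa> @ [(x, b)]) = set \<kappa>"
    using assms by auto
  then have "queried (\<kappa> @ [(x, b)]) = queried \<kappa>" "agrees r (\<kappa> @ [(x, b)]) = agrees r \<kappa>"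
    by (simp_all only: queried_def agrees_def fun_eq_iff) simp_all
  then have "heavy (\<kappa> @ [(x, b)]) = heavy \<kappa>" "weight r (\<kappa> @ [(x, b)]) = weight r \<kappa>"
    by (simp_all add: heavy_def weight_def unqueried_def fun_eq_iff)
  then show ?thesis
    by (simp add: potential_def)
qed

lemma potential_append_outside:
  assumes "x \<notin> {1..n} \<times> \<Sigma>"
  shows "potential r (\<kappa> @ [(x, b)]) = potential r \<kappa>"
proof -
  have "\<not> hits v x" if "v \<in> C" for v
  proof
    assume "hits v x"
    then have "fst x - 1 < n" "x = (Suc (fst x - 1), v ! (fst x - 1))"
      by (auto simp: hits_def prod_eq_iff)
    then show False
      using assms code_letter[OF that] by (metis SigmaI Suc_leI atLeastAtMost_iff le_add1 plus_1_eq_Suc zero_less_Suc less_eq_Suc_le)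
  qed
  then have "v \<in> C \<Longrightarrow> queried (\<kappa> @ [(x, b)]) v = queried \<kappa> v"
    and "v \<in> C \<Longrightarrow> agrees r (\<kappa> @ [(x, b)]) v = agrees r \<kappa> v" for v
    by (simp_all add: queried_append agrees_append)
  then have "heavy (\<kappa> @ [(x, b)]) = heavy \<kappa>"
    and "v \<in> heavy \<kappa> \<Longrightarrow> weight r (\<kappa> @ [(x, b)]) v = weight r \<kappa> v" for v
    by (auto simp: heavy_def weight_def unqueried_def)
  then show ?thesis
    by (simp add: potential_def)
qed

lemma weight_fresh_query:
  assumes "v \<in> C" "x \<notin> fst ` set \<kappa>"
  shows "weight r (\<kappa> @ [(x, True)]) v + weight r (\<kappa> @ [(x, False)]) v = 2 * weight r \<kappa> v"
proof (cases "hits v x")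
  case False
  then show ?thesis
    by (simp add: weight_def agrees_append unqueried_def queried_append)
next
  case True
  define j where "j = fst x - 1"
  have fresh: "j \<notin> queried \<kappa> v"
    using True assms(2) coordinate_eq_iff[of j v x] by (auto simp: queried_def j_def)
  have "j < n"
    using True by (auto simp: hits_def j_def)
  then have "card (queried \<kappa> v) < n"
    using fresh queried_subset psubset_card_mono[of "{..<n}" "queried \<kappa> v"] by auto
  then obtain u where u: "unqueried \<kappa> v = Suc u"
    by (simp add: unqueried_def) (metis Suc_diff_Suc)
  have "unqueried (\<kappa> @ [(x, c)]) v = u" for c
    using True fresh u finite_queried[of \<kappa> v] by (simp add: unqueried_def queried_append j_def)
  then have "weight r (\<kappa> @ [(x, c)]) v = (if c = r ! j then 2 * weight r \<kappa> v else 0)" for c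
    using u by (simp add: weight_def agrees_append True j_def)
  then show ?thesis
    by (cases "r ! j") simp_all
qed

lemma potential_fresh_query:
  assumes "x \<notin> fst ` set \<kappa>"
  shows "potential r (\<kappa> @ [(x, True)]) + potential r (\<kappa> @ [(x, False)]) \<le> 2 * potential r \<kappa>"
proof -
  define Hv where "Hv = heavy (\<kappa> @ [(x, True)])"
  define New where "New = Hv - heavy \<kappa>"
  have Hv: "heavy (\<kappa> @ [(x, b)]) = Hv" for b
    by (simp add: Hv_def heavy_def queried_append)
  have sub: "heavy \<kappa> \<subseteq> Hv"
  proof
    fix v
    assume "v \<in> heavy \<kappa>"
    moreover have "card (queried \<kappa> v) \<le> card (queried (\<kappa> @ [(x, True)]) v)"
      by (rule card_mono[OF finite_queried]) (simp add: queried_append)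
    ultimately show "v \<in> Hv"
      by (auto simp: Hv_def heavy_def)
  qed
  have fin: "finite Hv"
    by (simp add: Hv_def finite_heavy)
  have New_code: "New \<subseteq> C"
    by (auto simp: New_def Hv_def heavy_def)
  have card_Hv: "card Hv = card (heavy \<kappa>) + card New"
    using card_Un_disjoint[of "heavy \<kappa>" New] fin sub
    by (simp add: New_def Un_absorb1 finite_subset)
  have "(\<Sum>v\<in>Hv. weight r (\<kappa> @ [(x, True)]) v) + (\<Sum>v\<in>Hv. weight r (\<kappa> @ [(x, False)]) v)
      = 2 * (\<Sum>v\<in>Hv. weight r \<kappa> v)"
    using weight_fresh_query[OF _ assms] sub New_code
    by (simp add: sum.distrib[symmetric] sum_distrib_left New_def Hv_def heavy_def)
  also have "\<dots> = 2 * (\<Sum>v\<in>heavy \<kappa>. weight r \<kappa> v) + 2 * (\<Sum>v\<in>New. weight r \<kappa> v)"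
    by (simp add: sum.subset_diff[OF sub fin] New_def)
  also have "\<dots> \<le> 2 * (\<Sum>v\<in>heavy \<kappa>. weight r \<kappa> v) + 2 * (card New * threshold)"
    using sum_bounded_above[of New "weight r \<kappa>" threshold] light_weight_le New_code
    by (force simp: New_def)
  finally have "(\<Sum>v\<in>Hv. weight r (\<kappa> @ [(x, True)]) v) + (\<Sum>v\<in>Hv. weight r (\<kappa> @ [(x, False)]) v)
      \<le> 2 * (\<Sum>v\<in>heavy \<kappa>. weight r \<kappa> v) + 2 * (card New * threshold)" .
  then show ?thesis
    unfolding potential_def Hv card_Hv by (simp add: algebra_simps)
qed

lemma potential_append_stale:
  assumes "\<not> (x \<in> {1..n} \<times> \<Sigma> \<and> x \<notin> fst ` set \<kappa>)" "consistent H (\<kappa> @ [(x, b)])"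
  shows "potential r (\<kappa> @ [(x, b)]) = potential r \<kappa>"
proof (cases "x \<in> {1..n} \<times> \<Sigma>")
  case True
  then have "x \<in> fst ` set \<kappa>"
    using assms(1) by blast
  then obtain p where p: "p \<in> set \<kappa>" "fst p = x"
    by blast
  have "consistent H \<kappa>" "H x = b"
    using assms(2) by simp_all
  then have "snd p = b"
    using p unfolding consistent_def by metis
  then have "p = (x, b)"
    using p(2) by (simp add: prod_eq_iff)
  then show ?thesis
    using p(1) by (simp add: potential_append_known)
qed (rule potential_append_outside)

text \<open>Weighted by the number of consistent functions, \<open>potential + threshold\<close> does not grow
  along a query: a fresh query splits the functions evenly and at most doubles the potential,
  any other query leaves the potential unchanged on every consistent function.\<close>

lemma potential_query_step:
  "num_consistent n \<Sigma> (\<kappa> @ [(x, True)]) * (potential r (\<kappa> @ [(x, True)]) + threshold)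
   + num_consistent n \<Sigma> (\<kappa> @ [(x, False)]) * (potential r (\<kappa> @ [(x, False)]) + threshold)
   \<le> num_consistent n \<Sigma> \<kappa> * (potential r \<kappa> + threshold)"
proof (cases "x \<in> {1..n} \<times> \<Sigma> \<and> x \<notin> fst ` set \<kappa>")
  case True
  define N where "N = num_consistent n \<Sigma> (\<kappa> @ [(x, True)])"
  have "num_consistent n \<Sigma> \<kappa> = 2 * N"
    using num_consistent_fresh_query[OF finite_alphabet] True by (simp add: N_def)
  moreover from this have "num_consistent n \<Sigma> (\<kappa> @ [(x, False)]) = N"
    using num_consistent_fresh_query[OF finite_alphabet, of x n \<kappa> False] True by simp
  moreover have "N * (potential r (\<kappa> @ [(x, True)]) + potential r (\<kappa> @ [(x, False)])) \<le> N * (2 * potential r \<kappa>)"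
    using potential_fresh_query True by (intro mult_left_mono) auto
  ultimately show ?thesis
    unfolding N_def[symmetric] by (simp add: algebra_simps)
next
  case False
  have same: "num_consistent n \<Sigma> (\<kappa> @ [(x, b)]) * (potential r (\<kappa> @ [(x, b)]) + threshold)
      = num_consistent n \<Sigma> (\<kappa> @ [(x, b)]) * (potential r \<kappa> + threshold)" for b
  proof (cases "num_consistent n \<Sigma> (\<kappa> @ [(x, b)]) = 0")
    case False
    then have "{H \<in> hfuncs n \<Sigma>. consistent H (\<kappa> @ [(x, b)])} \<noteq> {}"
      by (metis card.empty num_consistent_def)
    then show ?thesis
      using potential_append_stale[OF \<open>\<not> (x \<in> {1..n} \<times> \<Sigma> \<and> x \<notin> fst ` set \<kappa>)\<close>] by auto
  qed simp
  show ?thesis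
    unfolding same num_consistent_split[OF finite_alphabet, of n \<kappa> x] by (simp add: algebra_simps)
qed

lemma card_success_le_weight:
  "card {H \<in> hfuncs n \<Sigma>. consistent H \<kappa> \<and> yz_eq n C H v r} \<le> num_consistent n \<Sigma> \<kappa> * weight r \<kappa> v"
proof (cases "v \<in> C \<and> agrees r \<kappa> v")
  case False
  have "agrees r \<kappa> v" if "consistent H \<kappa>" "yz_eq n C H v r" for H
    using that yz_eq_nth by (fastforce simp: agrees_def consistent_def)
  then have none: "{H \<in> hfuncs n \<Sigma>. consistent H \<kappa> \<and> yz_eq n C H v r} = {}"
    using False by (auto simp: yz_eq_def)
  show ?thesis
    unfolding none by (simp add: weight_def)
next
  case True
  then have v: "v \<in> C" and agree: "agrees r \<kappa> v"
    by auto
  define U where "U = (\<lambda>j. (Suc j, v ! j)) ` ({..<n} - queried \<kappa> v)"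
  define g where "g y = r ! (fst y - 1)" for y :: "nat \<times> 'a"
  have "card U = unqueried \<kappa> v"
    unfolding U_def unqueried_def
    by (subst card_image) (auto simp: inj_on_def card_Diff_subset finite_queried queried_subset)
  moreover have "U \<subseteq> {1..n} \<times> \<Sigma> - fst ` set \<kappa>"
    unfolding U_def using code_letter[OF v] by (auto simp: queried_def)
  ultimately have count: "card {H \<in> hfuncs n \<Sigma>. consistent H \<kappa> \<and> (\<forall>y\<in>U. H y = g y)} * 2 ^ unqueried \<kappa> v
      = num_consistent n \<Sigma> \<kappa>"
    using card_consistent_fixing[OF finite_alphabet, of U] by (simp add: U_def)
  have sub: "{H \<in> hfuncs n \<Sigma>. consistent H \<kappa> \<and> yz_eq n C H v r}
      \<subseteq> {H \<in> hfuncs n \<Sigma>. consistent H \<kappa> \<and> (\<forall>y\<in>U. H y = g y)}"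
    by (auto simp: U_def g_def yz_eq_nth)
  have "real (card {H \<in> hfuncs n \<Sigma>. consistent H \<kappa> \<and> yz_eq n C H v r})
      \<le> card {H \<in> hfuncs n \<Sigma>. consistent H \<kappa> \<and> (\<forall>y\<in>U. H y = g y)}"
    using card_mono[OF _ sub] finite_hfuncs[OF finite_alphabet] by simp
  also have "\<dots> = num_consistent n \<Sigma> \<kappa> * weight r \<kappa> v"
    using arg_cong[OF count, of real] agree by (simp add: weight_def field_simps)
  finally show ?thesis .
qed

lemma weight_le_potential:
  assumes "length \<kappa> \<le> ell" "v \<in> C"
  shows "weight r \<kappa> v \<le> potential r \<kappa> + threshold"
proof (cases "v \<in> heavy \<kappa>")
  case True
  then have "weight r \<kappa> v \<le> (\<Sum>v\<in>heavy \<kappa>. weight r \<kappa> v)"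
    by (intro member_le_sum) (auto simp: weight_def finite_heavy)
  moreover have "0 \<le> threshold * (L - card (heavy \<kappa>))"
    using card_heavy_le[OF assms(1)] threshold_nonneg by simp
  ultimately show ?thesis
    using threshold_nonneg by (simp add: potential_def)
next
  case False
  then show ?thesis
    using light_weight_le[OF assms(2) False, of r] potential_nonneg[OF assms(1), of r] by linarith
qed

lemma card_success_le_potential:
  assumes "length \<kappa> \<le> ell"
  shows "card {H \<in> hfuncs n \<Sigma>. consistent H \<kappa> \<and> yz_eq n C H v r}
    \<le> num_consistent n \<Sigma> \<kappa> * (potential r \<kappa> + threshold)"
proof (cases "v \<in> C")
  case True
  then show ?thesis
    using card_success_le_weight weight_le_potential[OF assms True, of r]
    by (meson mult_left_mono of_nat_0_le_iff order_trans)
next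
  case False
  then have none: "{H \<in> hfuncs n \<Sigma>. consistent H \<kappa> \<and> yz_eq n C H v r} = {}"
    by (auto simp: yz_eq_def)
  show ?thesis
    unfolding none using potential_nonneg[OF assms] threshold_nonneg by simp
qed

definition success_from ::
  "('a transcript \<Rightarrow> (nat \<times> 'a) pmf) \<Rightarrow> ('a transcript \<Rightarrow> 'a list pmf) \<Rightarrow> bool list \<Rightarrow> 'a hfun \<Rightarrow>
    nat \<Rightarrow> 'a transcript \<Rightarrow> real" where
  "success_from nq out r H k h =
     pmf (run_queries nq H k h \<bind> (\<lambda>h'. out h' \<bind> (\<lambda>v. return_pmf (yz_eq n C H v r)))) True"

lemma success_from_0:
  "success_from nq out r H 0 h = measure_pmf.expectation (out h) (\<lambda>v. of_bool (yz_eq n C H v r))"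
  by (simp add: success_from_def pmf_bind indicator_def)

lemma success_from_Suc:
  "success_from nq out r H (Suc k) h
    = measure_pmf.expectation (nq h) (\<lambda>x. success_from nq out r H k (h @ [(x, H x)]))"
  by (simp add: success_from_def bind_assoc_pmf pmf_bind)

lemma success_from_abs_le: "\<bar>success_from nq out r H k h\<bar> \<le> 1"
  by (simp add: success_from_def pmf_le_1)

lemma success_le_potential:
  "length \<kappa> + k \<le> ell \<Longrightarrow>
    (\<Sum>H | H \<in> hfuncs n \<Sigma> \<and> consistent H \<kappa>. success_from nq out r H k h)
    \<le> num_consistent n \<Sigma> \<kappa> * (potential r \<kappa> + threshold)"
proof (induction k arbitrary: \<kappa> h)
  case 0
  let ?A = "{H. H \<in> hfuncs n \<Sigma> \<and> consistent H \<kappa>}"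
  let ?bound = "num_consistent n \<Sigma> \<kappa> * (potential r \<kappa> + threshold)"
  have "(\<Sum>H\<in>?A. success_from nq out r H 0 h)
      = (\<Sum>H\<in>?A. measure_pmf.expectation (out h) (\<lambda>v. of_bool (yz_eq n C H v r)))"
    by (simp add: success_from_0)
  also have "\<dots> \<le> measure_pmf.expectation (out h) (\<lambda>_. ?bound)"
  proof (rule sum_expectation_le[where B=1 and B'="\<bar>?bound\<bar>"])
    fix v
    have "(\<Sum>H\<in>?A. of_bool (yz_eq n C H v r) :: real)
        = card {H \<in> hfuncs n \<Sigma>. consistent H \<kappa> \<and> yz_eq n C H v r}"
      using finite_hfuncs[OF finite_alphabet] by (simp add: Int_def conj_assoc)
    also have "\<dots> \<le> ?bound"
      by (rule card_success_le_potential) (use "0.prems" in simp)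
    finally show "(\<Sum>H\<in>?A. of_bool (yz_eq n C H v r)) \<le> ?bound" .
  qed auto
  finally show ?case
    by simp
next
  case (Suc k)
  let ?A = "\<lambda>\<kappa>. {H. H \<in> hfuncs n \<Sigma> \<and> consistent H \<kappa>}"
  let ?bound = "\<lambda>\<kappa>. num_consistent n \<Sigma> \<kappa> * (potential r \<kappa> + threshold)"
  have "(\<Sum>H\<in>?A \<kappa>. success_from nq out r H (Suc k) h)
      = (\<Sum>H\<in>?A \<kappa>. measure_pmf.expectation (nq h) (\<lambda>x. success_from nq out r H k (h @ [(x, H x)])))"
    by (simp add: success_from_Suc)
  also have "\<dots> \<le> measure_pmf.expectation (nq h) (\<lambda>_. ?bound \<kappa>)"
  proof (rule sum_expectation_le[where B=1 and B'="\<bar>?bound \<kappa>\<bar>"])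
    fix x
    have "(\<Sum>H\<in>?A \<kappa>. success_from nq out r H k (h @ [(x, H x)]))
        = (\<Sum>H\<in>?A (\<kappa> @ [(x, True)]). success_from nq out r H k (h @ [(x, True)]))
          + (\<Sum>H\<in>?A (\<kappa> @ [(x, False)]). success_from nq out r H k (h @ [(x, False)]))"
      by (rule sum_consistent_append[OF finite_alphabet,
            where f="\<lambda>H b. success_from nq out r H k (h @ [(x, b)])"])
    also have "\<dots> \<le> ?bound (\<kappa> @ [(x, True)]) + ?bound (\<kappa> @ [(x, False)])"
      by (intro add_mono Suc.IH) (use Suc.prems in simp_all)
    also have "\<dots> \<le> ?bound \<kappa>"
      by (rule potential_query_step)
    finally show "(\<Sum>H\<in>?A \<kappa>. success_from nq out r H k (h @ [(x, H x)])) \<le> ?bound \<kappa>" .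
  qed (auto simp: success_from_abs_le)
  finally show ?case
    by simp
qed

lemma card_agrees_le: "card {r \<in> bitstrings n. agrees r \<kappa> v} \<le> 2 ^ unqueried \<kappa> v"
proof (cases "{r \<in> bitstrings n. agrees r \<kappa> v} = {}")
  case True
  show ?thesis
    unfolding True by simp
next
  case False
  then obtain r0 where r0: "agrees r0 \<kappa> v"
    by auto
  have "r ! j = r0 ! j" if "agrees r \<kappa> v" "j \<in> queried \<kappa> v" for r j
  proof -
    obtain p where "p \<in> set \<kappa>" "fst p = (Suc j, v ! j)" "j < n"
      using \<open>j \<in> queried \<kappa> v\<close> by (auto simp: queried_def)
    then show ?thesis
      using that(1) r0 unfolding agrees_def by metis
  qed
  then have "card {r \<in> bitstrings n. agrees r \<kappa> v}
      \<le> card {r \<in> bitstrings n. \<forall>j\<in>queried \<kappa> v. r ! j = r0 ! j}"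
    by (intro card_mono) (auto simp: finite_bitstrings)
  moreover have "card {r \<in> bitstrings n. \<forall>j\<in>queried \<kappa> v. r ! j = r0 ! j} * 2 ^ card (queried \<kappa> v)
      = 2 ^ unqueried \<kappa> v * 2 ^ card (queried \<kappa> v)"
    using card_bitstrings_fixing[OF finite_queried queried_subset]
      card_mono[OF _ queried_subset, of \<kappa> v]
    by (simp add: unqueried_def power_add[symmetric])
  ultimately show ?thesis
    by simp
qed

lemma sum_weight_le_1: "(\<Sum>r\<in>bitstrings n. weight r \<kappa> v) \<le> 1"
proof -
  have "(\<Sum>r\<in>bitstrings n. weight r \<kappa> v) = (\<Sum>r\<in>{r \<in> bitstrings n. agrees r \<kappa> v}. (1/2) ^ unqueried \<kappa> v)"
    unfolding weight_def by (rule sum.inter_filter[symmetric, OF finite_bitstrings])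
  also have "\<dots> = card {r \<in> bitstrings n. agrees r \<kappa> v} * (1/2) ^ unqueried \<kappa> v"
    by simp
  also have "\<dots> \<le> 2 ^ unqueried \<kappa> v * (1/2) ^ unqueried \<kappa> v"
  proof (rule mult_right_mono)
    show "real (card {r \<in> bitstrings n. agrees r \<kappa> v}) \<le> 2 ^ unqueried \<kappa> v"
      using card_agrees_le by (metis of_nat_le_iff of_nat_numeral of_nat_power)
  qed simp
  finally show ?thesis
    by (simp add: power_one_over)
qed

lemma sum_potential_le:
  assumes "length \<kappa> \<le> ell"
  shows "(\<Sum>r\<in>bitstrings n. potential r \<kappa> + threshold) \<le> 2 ^ n * error_bound n \<zeta> L"
proof -
  have heavy_L: "card (heavy \<kappa>) \<le> L"
    by (rule card_heavy_le[OF assms])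
  have "(\<Sum>r\<in>bitstrings n. \<Sum>v\<in>heavy \<kappa>. weight r \<kappa> v) = (\<Sum>v\<in>heavy \<kappa>. \<Sum>r\<in>bitstrings n. weight r \<kappa> v)"
    by (rule sum.swap)
  also have "\<dots> \<le> (\<Sum>v\<in>heavy \<kappa>. 1)"
    by (intro sum_mono sum_weight_le_1)
  also have "\<dots> = card (heavy \<kappa>)"
    by simp
  also have "\<dots> \<le> 2 ^ n * ((1/2) ^ n * L)"
    using heavy_L by (simp add: power_one_over)
  finally have "(\<Sum>r\<in>bitstrings n. potential r \<kappa> + threshold)
      \<le> 2 ^ n * ((1/2) ^ n * L) + 2 ^ n * (threshold * (L - card (heavy \<kappa>)) + threshold)"
    by (simp add: potential_def sum.distrib card_bitstrings distrib_left)
  also have "\<dots> \<le> 2 ^ n * ((1/2) ^ n * L) + 2 ^ n * (threshold * L + threshold)"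
    using threshold_nonneg by (simp add: algebra_simps)
  also have "\<dots> = 2 ^ n * error_bound n \<zeta> L"
    by (simp add: error_bound_def threshold_def algebra_simps)
  finally show ?thesis .
qed

lemma sum_success_le:
  assumes "length \<kappa> + k \<le> ell"
  shows "(\<Sum>r\<in>bitstrings n. \<Sum>H | H \<in> hfuncs n \<Sigma> \<and> consistent H \<kappa>. success_from (nq r) (out r) r H k [])
    \<le> 2 ^ n * num_consistent n \<Sigma> \<kappa> * error_bound n \<zeta> L"
proof -
  have "(\<Sum>r\<in>bitstrings n. \<Sum>H | H \<in> hfuncs n \<Sigma> \<and> consistent H \<kappa>. success_from (nq r) (out r) r H k [])
      \<le> (\<Sum>r\<in>bitstrings n. num_consistent n \<Sigma> \<kappa> * (potential r \<kappa> + threshold))"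
    by (intro sum_mono success_le_potential[OF assms])
  also have "\<dots> \<le> num_consistent n \<Sigma> \<kappa> * (2 ^ n * error_bound n \<zeta> L)"
    unfolding sum_distrib_left[symmetric] using assms
    by (intro mult_left_mono sum_potential_le) auto
  finally show ?thesis
    by (simp add: algebra_simps)
qed

end

section \<open>Independent repetitions\<close>

fun run_random ::
  "('a transcript \<Rightarrow> (nat \<times> 'a) pmf) \<Rightarrow> nat \<Rightarrow> 'a transcript \<Rightarrow> 'a transcript pmf" where
  "run_random nq 0 h = return_pmf h"
| "run_random nq (Suc k) h =
     nq h \<bind> (\<lambda>x. pmf_of_set UNIV \<bind> (\<lambda>b. run_random nq k (h @ [(x, b)])))"

lemma run_random_extends:
  "h' \<in> set_pmf (run_random nq k h) \<Longrightarrow> \<exists>rest. h' = h @ rest \<and> length rest = k"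
proof (induction k arbitrary: h)
  case (Suc k)
  then obtain x b where "h' \<in> set_pmf (run_random nq k (h @ [(x, b)]))"
    by (auto simp: set_bind_pmf)
  from Suc.IH[OF this] obtain rest where "h' = (h @ [(x, b)]) @ rest" "length rest = k"
    by blast
  then show ?case
    by (intro exI[of _ "(x, b) # rest"]) simp
qed simp

lemma pmf_bind_True_eq_0:
  assumes "\<And>y. y \<in> set_pmf M \<Longrightarrow> f y = return_pmf False"
  shows "pmf (M \<bind> f) True = 0"
  using assms by (auto simp: pmf_eq_0_set_pmf set_bind_pmf)

lemma expectation_uniform_bool:
  "measure_pmf.expectation (pmf_of_set UNIV) f = (f True + f False) / (2 :: real)"
  by (subst integral_pmf_of_set) (auto simp: UNIV_bool)

text \<open>Answering the queries with fresh coin flips and rejecting unless the final transcript is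
  consistent with \<open>H\<close> loses exactly a factor \<open>1/2\<close> per query.\<close>

lemma run_queries_eq_run_random:
  "consistent H h \<Longrightarrow> pmf (run_queries nq H k h \<bind> g) True =
     2 ^ k * pmf (run_random nq k h \<bind> (\<lambda>h'. if consistent H h' then g h' else return_pmf False)) True"
proof (induction k arbitrary: h)
  case (Suc k)
  define g' where "g' = (\<lambda>h'. if consistent H h' then g h' else return_pmf False)"
  define f where "f x b = pmf (run_random nq k (h @ [(x, b)]) \<bind> g') True" for x b
  have wrong: "f x b = 0" if "b \<noteq> H x" for x b
    unfolding f_def
  proof (rule pmf_bind_True_eq_0)
    fix y
    assume "y \<in> set_pmf (run_random nq k (h @ [(x, b)]))"
    then obtain rest where "y = (h @ [(x, b)]) @ rest"
      using run_random_extends by blast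
    then show "g' y = return_pmf False"
      using that by (simp add: g'_def)
  qed
  have "pmf (run_queries nq H (Suc k) h \<bind> g) True
      = measure_pmf.expectation (nq h) (\<lambda>x. pmf (run_queries nq H k (h @ [(x, H x)]) \<bind> g) True)"
    by (simp add: bind_assoc_pmf pmf_bind)
  also have "\<dots> = measure_pmf.expectation (nq h) (\<lambda>x. 2 ^ k * f x (H x))"
    using Suc by (simp add: f_def g'_def)
  also have "\<dots> = measure_pmf.expectation (nq h) (\<lambda>x. 2 ^ Suc k * ((f x True + f x False) / 2))"
  proof (rule Bochner_Integration.integral_cong[OF refl])
    fix x
    show "2 ^ k * f x (H x) = 2 ^ Suc k * ((f x True + f x False) / 2)"
      using wrong[of False x] wrong[of True x] by (cases "H x") auto
  qed
  also have "\<dots> = 2 ^ Suc k * pmf (run_random nq (Suc k) h \<bind> g') True"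
    by (simp add: bind_assoc_pmf pmf_bind f_def expectation_uniform_bool)
  finally show ?case
    by (simp add: g'_def)
qed (simp add: bind_return_pmf)

definition claim_transcript :: "nat \<Rightarrow> 'a list \<Rightarrow> bool list \<Rightarrow> 'a transcript" where
  "claim_transcript n v r = map (\<lambda>i. ((Suc i, v ! i), r ! i)) [0..<n]"

lemma yz_eq_iff_consistent:
  assumes "length r = n" "C \<subseteq> words n \<Sigma>"
  shows "yz_eq n C H v r \<longleftrightarrow> v \<in> C \<and> consistent H (claim_transcript n v r)"
proof -
  have "consistent H (claim_transcript n v r) \<longleftrightarrow> (\<forall>i<n. H (Suc i, v ! i) = r ! i)"
    by (auto simp: consistent_def claim_transcript_def)
  moreover have "map (\<lambda>i. H (Suc i, v ! i)) [0..<n] = r \<longleftrightarrow> (\<forall>i<n. H (Suc i, v ! i) = r ! i)"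
    using assms(1) by (auto simp: list_eq_iff_nth_eq)
  ultimately show ?thesis
    using assms(2) by (auto simp: yz_eq_def words_def)
qed

text \<open>Transcripts are wrapped in an option: \<open>None\<close> records a run whose output is not a
  codeword, which no function accepts.\<close>

definition consistent_opt :: "'a hfun \<Rightarrow> 'a transcript option \<Rightarrow> bool" where
  "consistent_opt H \<omega> = (case \<omega> of None \<Rightarrow> False | Some \<rho> \<Rightarrow> consistent H \<rho>)"

lemma consistent_opt_if: "consistent_opt H (if P then Some \<rho> else None) \<longleftrightarrow> P \<and> consistent H \<rho>"
  by (simp add: consistent_opt_def)

fun append_opt :: "'a transcript option \<Rightarrow> 'a transcript option \<Rightarrow> 'a transcript option" where
  "append_opt (Some a) (Some b) = Some (a @ b)"
| "append_opt _ _ = None"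

lemma consistent_opt_append_opt: "consistent_opt H (append_opt a b) \<longleftrightarrow> consistent_opt H a \<and> consistent_opt H b"
  by (cases a; cases b) (auto simp: consistent_opt_def)

definition consistency_prob :: "'a hfun \<Rightarrow> 'a transcript option pmf \<Rightarrow> real" where
  "consistency_prob H M = pmf (M \<bind> (\<lambda>\<omega>. return_pmf (consistent_opt H \<omega>))) True"

lemma consistency_prob_eq_expectation:
  "consistency_prob H M = measure_pmf.expectation M (\<lambda>\<omega>. of_bool (consistent_opt H \<omega>))"
  by (simp add: consistency_prob_def pmf_bind indicator_def)

lemma consistency_prob_append_opt:
  "consistency_prob H (M \<bind> (\<lambda>a. N \<bind> (\<lambda>b. return_pmf (append_opt a b))))
    = consistency_prob H M * consistency_prob H N"
proof -
  have "consistency_prob H (M \<bind> (\<lambda>a. N \<bind> (\<lambda>b. return_pmf (append_opt a b))))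
      = measure_pmf.expectation M (\<lambda>a. measure_pmf.expectation N
          (\<lambda>b. of_bool (consistent_opt H a) * of_bool (consistent_opt H b)))"
    unfolding consistency_prob_def
    by (simp add: bind_assoc_pmf bind_return_pmf pmf_bind consistent_opt_append_opt indicator_def of_bool_conj)
  then show ?thesis
    by (simp add: consistency_prob_eq_expectation)
qed

definition avg_success ::
  "nat \<Rightarrow> 'a list set \<Rightarrow> nat \<Rightarrow> (bool list \<Rightarrow> 'a transcript \<Rightarrow> (nat \<times> 'a) pmf) \<Rightarrow>
    (bool list \<Rightarrow> 'a transcript \<Rightarrow> 'a list pmf) \<Rightarrow> 'a hfun \<Rightarrow> real" where
  "avg_success n C k nq out H =
     (\<Sum>r\<in>bitstrings n. pmf (alg_output (nq r) (out r) H k \<bind> (\<lambda>v. return_pmf (yz_eq n C H v r))) True) / 2 ^ n"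

context recoverable_code
begin

context
  fixes q :: nat
    and nq :: "bool list \<Rightarrow> 'a transcript \<Rightarrow> (nat \<times> 'a) pmf"
    and out :: "bool list \<Rightarrow> 'a transcript \<Rightarrow> 'a list pmf"
begin

lemma avg_success_eq: "avg_success n C q nq out H = (\<Sum>r\<in>bitstrings n. success_from (nq r) (out r) r H q []) / 2 ^ n"
  by (simp add: avg_success_def success_from_def alg_output_def bind_assoc_pmf)

lemma avg_success_nonneg: "0 \<le> avg_success n C q nq out H"
  by (simp add: avg_success_def sum_nonneg)

lemma avg_success_le_1: "avg_success n C q nq out H \<le> 1"
proof -
  have "(\<Sum>r\<in>bitstrings n. success_from (nq r) (out r) r H q []) \<le> (\<Sum>r\<in>bitstrings n. 1)"
    by (rule sum_mono) (simp add: success_from_def pmf_le_1)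
  then show ?thesis
    by (simp add: avg_success_eq card_bitstrings)
qed

text \<open>One run of the algorithm on a uniform \<open>r\<close> with coin-flip answers, recording the
  transcript together with the claim \<open>f_C^H(v) = r\<close> about its output.\<close>

definition trial :: "'a transcript option pmf" where
  "trial = pmf_of_set (bitstrings n) \<bind> (\<lambda>r. run_random (nq r) q [] \<bind>
     (\<lambda>h. map_pmf (\<lambda>v. if v \<in> C then Some (h @ claim_transcript n v r) else None) (out r h)))"

fun trials :: "nat \<Rightarrow> 'a transcript option pmf" where
  "trials 0 = return_pmf (Some [])"
| "trials (Suc t) = trials t \<bind> (\<lambda>a. trial \<bind> (\<lambda>b. return_pmf (append_opt a b)))"

lemma avg_success_eq_consistency_prob: "avg_success n C q nq out H = 2 ^ q * consistency_prob H trial"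
proof -
  have "success_from (nq r) (out r) r H q [] = 2 ^ q * consistency_prob H (run_random (nq r) q [] \<bind>
      (\<lambda>h. map_pmf (\<lambda>v. if v \<in> C then Some (h @ claim_transcript n v r) else None) (out r h)))"
    if "r \<in> bitstrings n" for r
  proof -
    have yz: "yz_eq n C H v r \<longleftrightarrow> v \<in> C \<and> consistent H (claim_transcript n v r)" for v
      using that code_words by (intro yz_eq_iff_consistent) (simp_all add: bitstrings_def)
    have "(if consistent H h then out r h \<bind> (\<lambda>v. return_pmf (yz_eq n C H v r)) else return_pmf False)
        = map_pmf (\<lambda>v. if v \<in> C then Some (h @ claim_transcript n v r) else None) (out r h)
            \<bind> (\<lambda>\<omega>. return_pmf (consistent_opt H \<omega>))" for h
      by (cases "consistent H h")
         (auto simp: map_pmf_def bind_assoc_pmf bind_return_pmf yz consistent_opt_if intro!: bind_pmf_cong)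
    then show ?thesis
      unfolding success_from_def consistency_prob_def
      by (subst run_queries_eq_run_random) (simp_all add: bind_assoc_pmf)
  qed
  moreover have "consistency_prob H trial = (\<Sum>r\<in>bitstrings n. consistency_prob H (run_random (nq r) q [] \<bind>
      (\<lambda>h. map_pmf (\<lambda>v. if v \<in> C then Some (h @ claim_transcript n v r) else None) (out r h)))) / 2 ^ n"
    unfolding consistency_prob_def trial_def
    by (simp add: bind_assoc_pmf pmf_bind integral_pmf_of_set[OF bitstrings_not_empty finite_bitstrings]
        card_bitstrings)
  ultimately show ?thesis
    by (simp add: avg_success_eq sum_distrib_left)
qed

lemma avg_success_power: "avg_success n C q nq out H ^ t = 2 ^ (q * t) * consistency_prob H (trials t)"
proof (induction t)
  case 0
  then show ?case
    by (simp add: consistency_prob_def bind_return_pmf consistent_opt_def)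
next
  case (Suc t)
  then show ?case
    by (simp add: consistency_prob_append_opt avg_success_eq_consistency_prob power_add algebra_simps)
qed

lemma length_trial: "Some \<rho> \<in> set_pmf trial \<Longrightarrow> length \<rho> = q + n"
  by (auto simp: trial_def claim_transcript_def split: if_splits dest!: run_random_extends)

lemma length_trials: "Some \<rho> \<in> set_pmf (trials t) \<Longrightarrow> length \<rho> \<le> t * (q + n)"
proof (induction t arbitrary: \<rho>)
  case (Suc t)
  then obtain a b where "a \<in> set_pmf (trials t)" "b \<in> set_pmf trial" "append_opt a b = Some \<rho>"
    by auto
  moreover from this obtain a' b' where "a = Some a'" "b = Some b'" "\<rho> = a' @ b'"
    by (cases a; cases b) auto
  ultimately show ?case
    using Suc.IH length_trial by fastforce
qed simp

lemma sum_consistent_avg_success_le: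
  assumes "length \<rho> + q \<le> ell"
  shows "(\<Sum>H | H \<in> hfuncs n \<Sigma> \<and> consistent H \<rho>. avg_success n C q nq out H)
    \<le> num_consistent n \<Sigma> \<rho> * error_bound n \<zeta> L"
proof -
  have "(\<Sum>H | H \<in> hfuncs n \<Sigma> \<and> consistent H \<rho>. avg_success n C q nq out H)
      = (\<Sum>r\<in>bitstrings n. \<Sum>H | H \<in> hfuncs n \<Sigma> \<and> consistent H \<rho>. success_from (nq r) (out r) r H q []) / 2 ^ n"
    by (simp add: avg_success_eq sum_divide_distrib[symmetric] sum.swap[of _ "bitstrings n"])
  also have "\<dots> \<le> num_consistent n \<Sigma> \<rho> * error_bound n \<zeta> L"
    using sum_success_le[OF assms, of nq out] by (simp add: divide_le_eq mult_ac)
  finally show ?thesis .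
qed

lemma sum_consistent_opt_avg_success_le:
  assumes "\<omega> \<in> set_pmf (trials t)" "t * (q + n) + q \<le> ell"
  shows "(\<Sum>H\<in>hfuncs n \<Sigma>. of_bool (consistent_opt H \<omega>) * avg_success n C q nq out H)
    \<le> error_bound n \<zeta> L * (\<Sum>H\<in>hfuncs n \<Sigma>. of_bool (consistent_opt H \<omega>))"
proof (cases \<omega>)
  case (Some \<rho>)
  then have "length \<rho> \<le> t * (q + n)"
    using length_trials assms(1) by blast
  then have "real (length \<rho>) \<le> real (t * (q + n))"
    by (simp only: of_nat_le_iff)
  then have "length \<rho> + q \<le> ell"
    using assms(2) by linarith
  then show ?thesis
    using sum_consistent_avg_success_le[of \<rho>] finite_hfuncs[OF finite_alphabet] Some
    by (simp add: consistent_opt_def num_consistent_def Int_def mult_ac)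
qed (simp add: consistent_opt_def)

lemma sum_consistency_prob_avg_success_le:
  assumes "t * (q + n) + q \<le> ell"
  shows "(\<Sum>H\<in>hfuncs n \<Sigma>. consistency_prob H (trials t) * avg_success n C q nq out H)
    \<le> error_bound n \<zeta> L * (\<Sum>H\<in>hfuncs n \<Sigma>. consistency_prob H (trials t))"
proof -
  let ?F = "hfuncs n \<Sigma>"
  let ?c = "\<lambda>H \<omega>. of_bool (consistent_opt H \<omega>) :: real"
  have int: "integrable (measure_pmf M) (?c H)" for M H
    by (rule measure_pmf.integrable_const_bound[where B=1]) auto
  have "\<bar>\<Sum>H\<in>?F. ?c H \<omega>\<bar> \<le> card ?F" for \<omega>
    using finite_hfuncs[OF finite_alphabet] by (simp add: card_mono)
  then have bound: "\<bar>error_bound n \<zeta> L * (\<Sum>H\<in>?F. ?c H \<omega>)\<bar> \<le> \<bar>error_bound n \<zeta> L\<bar> * card ?F" for \<omega>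
    by (simp add: abs_mult mult_left_mono)
  have "(\<Sum>H\<in>?F. consistency_prob H (trials t) * avg_success n C q nq out H)
      = (\<Sum>H\<in>?F. measure_pmf.expectation (trials t) (\<lambda>\<omega>. ?c H \<omega> * avg_success n C q nq out H))"
    by (simp add: consistency_prob_eq_expectation)
  also have "\<dots> \<le> measure_pmf.expectation (trials t) (\<lambda>\<omega>. error_bound n \<zeta> L * (\<Sum>H\<in>?F. ?c H \<omega>))"
    using sum_consistent_opt_avg_success_le[OF _ assms] bound avg_success_nonneg avg_success_le_1
    by (intro sum_expectation_le[where B=1]) (auto simp: abs_le_iff)
  also have "\<dots> = error_bound n \<zeta> L * (\<Sum>H\<in>?F. consistency_prob H (trials t))"
    by (simp add: consistency_prob_eq_expectation Bochner_Integration.integral_sum[OF int])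
  finally show ?thesis .
qed

lemma sum_avg_success_power_le:
  "t * (q + n) \<le> ell \<Longrightarrow>
    (\<Sum>H\<in>hfuncs n \<Sigma>. avg_success n C q nq out H ^ t) \<le> error_bound n \<zeta> L ^ t * card (hfuncs n \<Sigma>)"
proof (induction t)
  case (Suc t)
  have nonneg: "0 \<le> error_bound n \<zeta> L"
    using L_nonneg Suc.prems by (simp add: error_bound_def)
  have "(\<Sum>H\<in>hfuncs n \<Sigma>. avg_success n C q nq out H ^ Suc t)
      = 2 ^ (q * t) * (\<Sum>H\<in>hfuncs n \<Sigma>. consistency_prob H (trials t) * avg_success n C q nq out H)"
    by (simp add: avg_success_power sum_distrib_left algebra_simps)
  also have "\<dots> \<le> 2 ^ (q * t) * (error_bound n \<zeta> L * (\<Sum>H\<in>hfuncs n \<Sigma>. consistency_prob H (trials t)))"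
    using Suc.prems by (intro mult_left_mono sum_consistency_prob_avg_success_le) simp_all
  also have "\<dots> = error_bound n \<zeta> L * (\<Sum>H\<in>hfuncs n \<Sigma>. avg_success n C q nq out H ^ t)"
    by (simp add: avg_success_power sum_distrib_left algebra_simps)
  also have "\<dots> \<le> error_bound n \<zeta> L * (error_bound n \<zeta> L ^ t * card (hfuncs n \<Sigma>))"
    using Suc nonneg by (intro mult_left_mono) simp_all
  finally show ?case
    by simp
qed simp

end

end

section \<open>Advice\<close>

lemma power_mean_le_mean_power:
  fixes x :: "'b \<Rightarrow> real"
  assumes "finite S" "S \<noteq> {}" "\<And>i. i \<in> S \<Longrightarrow> 0 \<le> x i"
  shows "((\<Sum>i\<in>S. x i) / card S) ^ t \<le> (\<Sum>i\<in>S. x i ^ t) / card S"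
proof -
  have convex: "convex_on {0..} (\<lambda>x::real. x ^ t)"
    by (cases "even t") (auto intro: convex_on_subset[OF convex_power_even] convex_power_odd)
  have "0 < real (card S)"
    using assms(1,2) by (simp add: card_gt_0_iff)
  then have "(\<Sum>i\<in>S. (1 / card S) *\<^sub>R x i) ^ t \<le> (\<Sum>i\<in>S. (1 / card S) * x i ^ t)"
    by (intro convex_on_sum[OF assms(1,2) convex]) (use assms in auto)
  then show ?thesis
    by (simp add: sum_distrib_left[symmetric] sum_distrib_right[symmetric] divide_inverse mult.commute)
qed

lemma success_prob_eq_mean:
  assumes "finite (\<Sigma> n)"
  shows "success_prob nq out q \<Sigma> C n z =
    (\<Sum>H\<in>hfuncs n (\<Sigma> n). avg_success n (C n) (q n) (nq n (z H)) (out n (z H)) H) / card (hfuncs n (\<Sigma> n))"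
  unfolding success_prob_def avg_success_def
  by (simp add: pmf_bind integral_pmf_of_set[OF hfuncs_not_empty finite_hfuncs[OF assms]]
      integral_pmf_of_set[OF bitstrings_not_empty finite_bitstrings] card_bitstrings sum_divide_distrib[symmetric])

context recoverable_code
begin

lemma advice_success_le:
  fixes nq :: "bool list \<Rightarrow> bool list \<Rightarrow> 'a transcript \<Rightarrow> (nat \<times> 'a) pmf"
    and out :: "bool list \<Rightarrow> bool list \<Rightarrow> 'a transcript \<Rightarrow> 'a list pmf"
  assumes queries: "(s + 1) * (k + n) \<le> ell" and advice: "\<And>H. length (z H) = s"
  shows "(\<Sum>H\<in>hfuncs n \<Sigma>. avg_success n C k (nq (z H)) (out (z H)) H) / card (hfuncs n \<Sigma>)
    \<le> 2 * error_bound n \<zeta> L"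
proof -
  let ?F = "hfuncs n \<Sigma>"
  let ?Y = "\<lambda>a. avg_success n C k (nq a) (out a)"
  define m where "m = (\<Sum>H\<in>?F. ?Y (z H) H) / card ?F"
  have fin: "finite ?F"
    by (simp add: finite_hfuncs[OF finite_alphabet])
  have "0 \<le> error_bound n \<zeta> L"
    using L_nonneg queries by (simp add: error_bound_def)
  have "m ^ Suc s \<le> (\<Sum>H\<in>?F. ?Y (z H) H ^ Suc s) / card ?F"
    unfolding m_def by (rule power_mean_le_mean_power[OF fin hfuncs_not_empty avg_success_nonneg])
  also have "\<dots> \<le> (\<Sum>H\<in>?F. \<Sum>a\<in>bitstrings s. ?Y a H ^ Suc s) / card ?F"
    using advice avg_success_nonneg finite_bitstrings
    by (intro divide_right_mono sum_mono member_le_sum) (auto simp: bitstrings_def)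
  also have "\<dots> = (\<Sum>a\<in>bitstrings s. \<Sum>H\<in>?F. ?Y a H ^ Suc s) / card ?F"
    by (subst sum.swap) simp
  also have "\<dots> \<le> (\<Sum>a\<in>bitstrings s. error_bound n \<zeta> L ^ Suc s * card ?F) / card ?F"
    using queries by (intro divide_right_mono sum_mono sum_avg_success_power_le) (simp_all add: mult.commute)
  also have "\<dots> = 2 ^ s * error_bound n \<zeta> L ^ Suc s"
    using fin hfuncs_not_empty[of n \<Sigma>] by (simp add: card_bitstrings)
  also have "\<dots> \<le> (2 * error_bound n \<zeta> L) ^ Suc s"
    using \<open>0 \<le> error_bound n \<zeta> L\<close> by (simp add: power_mult_distrib)
  finally have "m \<le> 2 * error_bound n \<zeta> L"
    by (rule power_le_imp_le_base) (use \<open>0 \<le> error_bound n \<zeta> L\<close> in simp)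
  then show ?thesis
    by (simp add: m_def)
qed

end

lemma success_prob_le_error_bound:
  assumes "finite (\<Sigma> n)" "C n \<subseteq> words n (\<Sigma> n)" "list_recoverable n (\<Sigma> n) (C n) \<zeta> ell L"
    and "(s + 1) * (q n + n) \<le> ell" "\<forall>H. length (z H) = s"
  shows "success_prob nq out q \<Sigma> C n z \<le> 2 * error_bound n \<zeta> L"
proof -
  interpret recoverable_code n "\<Sigma> n" "C n" \<zeta> ell L
    using assms(1-3) by unfold_locales
  show ?thesis
    unfolding success_prob_eq_mean[of \<Sigma> n, OF assms(1)]
    using advice_success_le[OF assms(4), where nq="nq n" and out="out n" and z=z] assms(5) by simp
qed

section \<open>Asymptotics\<close>

lemma poly_bounded_advice_queries:
  assumes "poly_bounded s" "poly_bounded q"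
  shows "poly_bounded (\<lambda>n. (s n + 1) * (q n + n))"
proof -
  obtain Ks ds where s: "\<And>n. s n \<le> Ks * (n + 1) ^ ds"
    using assms(1) unfolding poly_bounded_def by blast
  obtain Kq dq where q: "\<And>n. q n \<le> Kq * (n + 1) ^ dq"
    using assms(2) unfolding poly_bounded_def by blast
  have "(s n + 1) * (q n + n) \<le> ((Ks + 1) * (Kq + 1)) * (n + 1) ^ (ds + (dq + 1))" for n
  proof -
    have "1 \<le> (n + 1) ^ ds"
      by simp
    then have "s n + 1 \<le> Ks * (n + 1) ^ ds + (n + 1) ^ ds"
      using s[of n] by linarith
    then have a: "s n + 1 \<le> (Ks + 1) * (n + 1) ^ ds"
      by (simp add: algebra_simps)
    have grow: "(n + 1) ^ dq \<le> (n + 1) ^ (dq + 1)"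
      by (rule power_increasing) auto
    have "(n + 1) * 1 \<le> (n + 1) * (n + 1) ^ dq"
      by (rule mult_le_mono2) simp
    then have "n \<le> (n + 1) ^ (dq + 1)"
      by simp
    moreover have "q n \<le> Kq * (n + 1) ^ (dq + 1)"
      using q[of n] grow by (meson le_trans mult_le_mono2)
    ultimately have b: "q n + n \<le> (Kq + 1) * (n + 1) ^ (dq + 1)"
      by (simp add: algebra_simps)
    show ?thesis
      using mult_le_mono[OF a b] by (simp add: power_add algebra_simps)
  qed
  then show ?thesis
    unfolding poly_bounded_def by blast
qed

lemma poly_bounded_eventually_le_two_powr:
  assumes "poly_bounded f" "c > 0"
  obtains N where "\<And>n. n \<ge> N \<Longrightarrow> real (f n) \<le> 2 powr (real n powr c)"
proof -
  obtain K d :: nat where bound: "\<And>n. f n \<le> K * (n + 1) ^ d"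
    using assms(1) unfolding poly_bounded_def by blast
  have "((\<lambda>n::nat. K * (real n + 1) powr d / 2 powr (real n powr c)) \<longlongrightarrow> 0) sequentially"
    using assms(2) by real_asymp
  then have "eventually (\<lambda>n::nat. K * (real n + 1) powr d / 2 powr (real n powr c) < 1) sequentially"
    by (rule order_tendstoD(2)) simp
  then have "eventually (\<lambda>n::nat. K * (real n + 1) powr d \<le> 2 powr (real n powr c)) sequentially"
    by eventually_elim (simp add: divide_less_eq)
  then obtain N where "\<And>n. n \<ge> N \<Longrightarrow> K * (real n + 1) powr d \<le> 2 powr (real n powr c)"
    unfolding eventually_sequentially by blast
  moreover have "real (f n) \<le> K * (real n + 1) powr d" for n
  proof -
    have "real (f n) \<le> real (K * (n + 1) ^ d)"
      using bound[of n] by (simp only: of_nat_le_iff)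
    also have "\<dots> = K * (real n + 1) powr d"
      by (simp add: powr_realpow add_pos_nonneg add.commute)
    finally show ?thesis .
  qed
  ultimately show ?thesis
    using that order_trans by blast
qed

lemma error_bound_le:
  fixes K c' :: real
  assumes "n \<ge> 1" "\<zeta> > 0"
  shows "error_bound n \<zeta> (2 powr (K * real n powr c' * ln n ^ k))
    \<le> 3 * 2 powr ((\<bar>K\<bar> + 1) * real n powr c' * ln n ^ k - min \<zeta> 1 * n)"
proof -
  define A where "A = real n powr c' * ln n ^ k"
  define E where "E = (\<bar>K\<bar> + 1) * A"
  define w where "w = 2 powr (-(min \<zeta> 1 * n))"
  have "0 \<le> A"
    using assms by (simp add: A_def)
  then have "K * A \<le> E" "0 \<le> E"
    by (simp_all add: E_def mult_right_mono)
  have "(1/2) ^ n \<le> w"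
  proof -
    have "(1/2::real) ^ n = 2 powr (- real n)"
      by (simp add: powr_minus powr_realpow power_one_over inverse_eq_divide)
    also have "\<dots> \<le> w"
      unfolding w_def using assms(2) by (intro powr_mono) (auto intro!: mult_left_le_one_le)
    finally show ?thesis .
  qed
  moreover have "2 powr (-(\<zeta> * n)) \<le> w"
    unfolding w_def using assms(2) by (intro powr_mono) (auto intro!: mult_right_mono)
  moreover have "2 powr (K * A) \<le> 2 powr E"
    using \<open>K * A \<le> E\<close> by simp
  ultimately have "error_bound n \<zeta> (2 powr (K * A)) \<le> 2 powr E * (2 * w) + w"
    unfolding error_bound_def by (intro add_mono mult_mono) auto
  also have "\<dots> \<le> 3 * (2 powr E * w)"
  proof -
    have "1 \<le> 2 powr E"
      using \<open>0 \<le> E\<close> by (simp add: ge_one_powr_ge_zero)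
    then have "w \<le> 2 powr E * w"
      by (simp add: w_def)
    then show ?thesis
      by (simp add: algebra_simps)
  qed
  finally show ?thesis
    by (simp add: A_def E_def w_def powr_add[symmetric] mult.assoc)
qed

lemma negl_fun_error_bound:
  assumes "\<zeta> > 0" "0 < c'" "c' < 1"
  shows "negl_fun (\<lambda>n. 2 * error_bound n \<zeta> (2 powr (K * real n powr c' * ln n ^ k)))"
  unfolding negl_fun_def
proof
  fix a :: nat
  define B where "B n = 2 powr ((\<bar>K\<bar> + 1) * real n powr c' * ln n ^ k - min \<zeta> 1 * n)" for n :: nat
  have "((\<lambda>n::nat. 6 * real n powr a * B n) \<longlongrightarrow> 0) sequentially"
    unfolding B_def using assms by real_asymp
  then have "eventually (\<lambda>n. 6 * real n powr a * B n < 1) sequentially"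
    by (rule order_tendstoD(2)) simp
  then have "eventually (\<lambda>n. 6 * real n powr a * B n < 1 \<and> n \<ge> 1) sequentially"
    using eventually_ge_at_top by (rule eventually_conj)
  then obtain N where N: "\<And>n. n \<ge> N \<Longrightarrow> 6 * real n ^ a * B n \<le> 1 \<and> n \<ge> 1"
    unfolding eventually_sequentially by (fastforce simp: powr_realpow)
  have "\<bar>2 * error_bound n \<zeta> (2 powr (K * real n powr c' * ln n ^ k))\<bar> \<le> 1 / real n ^ a" if "n \<ge> N" for n
  proof -
    have "0 \<le> error_bound n \<zeta> (2 powr (K * real n powr c' * ln n ^ k))"
      by (simp add: error_bound_def)
    moreover have "error_bound n \<zeta> (2 powr (K * real n powr c' * ln n ^ k)) \<le> 3 * B n"
      using error_bound_le[of n \<zeta>] N[OF that] assms(1) by (simp add: B_def)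
    moreover have "6 * B n \<le> 1 / real n ^ a"
      using N[OF that] by (simp add: field_simps)
    ultimately show ?thesis
      by simp
  qed
  then show "\<exists>N. \<forall>n\<ge>N. \<bar>2 * error_bound n \<zeta> (2 powr (K * real n powr c' * ln n ^ k))\<bar> \<le> 1 / real n ^ a"
    by blast
qed

lemma negl_fun_eventually_eq:
  "negl_fun f \<Longrightarrow> negl_fun (\<lambda>n. if N \<le> n then f n else g n)"
  unfolding negl_fun_def by (metis (full_types) le_trans nat_le_linear max.cobounded1 max.cobounded2)

theorem theorem3p3:
  fixes \<Sigma> :: "nat \<Rightarrow> 'a set" and C :: "nat \<Rightarrow> 'a list set"
    and nq :: "nat \<Rightarrow> bool list \<Rightarrow> bool list \<Rightarrow> 'a transcript \<Rightarrow> (nat \<times> 'a) pmf"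
    and out :: "nat \<Rightarrow> bool list \<Rightarrow> bool list \<Rightarrow> 'a transcript \<Rightarrow> 'a list pmf"
    and q s :: "nat \<Rightarrow> nat"
  assumes "good_code_family \<Sigma> C"
    and "poly_bounded q"
    and "poly_bounded s"
  shows "\<exists>\<mu>. negl_fun \<mu> \<and>
           (\<forall>n. \<forall>z :: 'a hfun \<Rightarrow> bool list. (\<forall>H. length (z H) = s n) \<longrightarrow>
              success_prob nq out q \<Sigma> C n z \<le> \<mu> n)"
proof -
  obtain \<zeta> c c' K k N where "\<zeta> > 0" "0 < c" "c < c'" "c' < 1"
    and recoverable: "\<And>n. n \<ge> N \<Longrightarrow> list_recoverable n (\<Sigma> n) (C n) \<zeta> (2 powr (real n powr c))
      (2 powr (K * real n powr c' * ln n ^ k))"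
    using assms(1) unfolding good_code_family_def by blast
  have code: "finite (\<Sigma> n)" "C n \<subseteq> words n (\<Sigma> n)" for n
    using assms(1) by (auto simp: good_code_family_def)
  obtain N' where queries: "\<And>n. n \<ge> N' \<Longrightarrow> real ((s n + 1) * (q n + n)) \<le> 2 powr (real n powr c)"
    using poly_bounded_eventually_le_two_powr[OF poly_bounded_advice_queries[OF assms(3,2)] \<open>0 < c\<close>]
    by blast
  define \<mu> where "\<mu> n = (if max N N' \<le> n then 2 * error_bound n \<zeta> (2 powr (K * real n powr c' * ln n ^ k)) else 1)"
    for n
  have "success_prob nq out q \<Sigma> C n z \<le> \<mu> n" if "\<forall>H. length (z H) = s n" for n z
  proof (cases "max N N' \<le> n")
    case True
    then show ?thesis
      using success_prob_le_error_bound[where \<Sigma>=\<Sigma> and C=C and n=n and q=q,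
          OF code recoverable[of n] queries[of n] that] by (simp add: \<mu>_def)
  next
    case False
    then have "\<mu> n = 1"
      unfolding \<mu>_def by (simp only: if_False)
    then show ?thesis
      by (simp add: success_prob_def pmf_le_1)
  qed
  moreover have "negl_fun \<mu>"
    unfolding \<mu>_def using \<open>\<zeta> > 0\<close> \<open>0 < c\<close> \<open>c < c'\<close> \<open>c' < 1\<close>
    by (intro negl_fun_eventually_eq negl_fun_error_bound) auto
  ultimately show ?thesis
    by blast
qed

end
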